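(* Let $c\geq1$ be a natural number and let $X$ be a finite set of natural numbers, all greater than $2$, which is $(\omega\cdot c)$-large. Then every colouring $C\colon X\to\{0,\dots,c-1\}$ admits an $\omega$-large subset $H\subseteq X$ on which $C$ is constant.
   Context: Ordinals are notations below $\varepsilon_0$ in Cantor normal form; $\omega\cdot c$ denotes $\omega+\dots+\omega$ ($c$ times). Fundamental sequences: $0[x]=0$; $(\beta+1)[x]=\beta$; $(\beta+\omega)[x]=\beta+x$, meaning $\beta$ followed by $x$ copies of $1=\omega^0$. In general, for $\alpha=\omega^{\alpha_0}+\dots+\omega^{\alpha_n}$ with last exponent $\alpha_n=\delta+1$, $\alpha[x]=\omega^{\alpha_0}+\dots+\omega^{\alpha_{n-1}}+\omega^\delta\cdot x$. A finite set $X=\{x_0<\dots<x_{|X|-1}\}$ is $\alpha$-large if $\alpha[x_0][x_1]\cdots[x_{|X|-1}]=0$. *)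

theory Defs
  imports Main
begin

text \<open>Ordinal notations below epsilon_0 in Cantor normal form:
  CNF xs  denotes  omega^(xs!0) + ... + omega^(xs!(n-1)), exponents given again as
  notations (intended to be non-increasing). CNF [] is 0.\<close>
datatype cnf = CNF "cnf list"

definition cnf_zero :: cnf where "cnf_zero = CNF []"
definition cnf_one :: cnf where "cnf_one = CNF [cnf_zero]"
definition cnf_omega :: cnf where "cnf_omega = CNF [cnf_one]"
definition cnf_omega_mul :: "nat \<Rightarrow> cnf" where
  "cnf_omega_mul c = CNF (replicate c cnf_one)"

lemma size_last_less: "xs \<noteq> [] \<Longrightarrow> size (last xs) < Suc (size_list size xs)"
  by (induction xs) auto

text \<open>Fundamental sequences:
  0[x] = 0;  (beta+1)[x] = beta;
  (beta + omega^(delta+1))[x] = beta + omega^delta * x;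
  (beta + omega^lambda)[x] = beta + omega^(lambda[x]) for limit lambda (standard).\<close>
function fs :: "cnf \<Rightarrow> nat \<Rightarrow> cnf" where
  "fs (CNF xs) x =
    (if xs = [] then CNF []
     else (case last xs of CNF es \<Rightarrow>
       if es = [] then CNF (butlast xs)
       else if last es = CNF [] then CNF (butlast xs @ replicate x (CNF (butlast es)))
       else CNF (butlast xs @ [fs (CNF es) x])))"
  by pat_completeness auto
termination
proof (relation "measure (\<lambda>(a, _). size a)")
  show "wf (measure (\<lambda>(a, _). size a))" by simp
next
  fix xs :: "cnf list" and x :: nat and es
  assume "xs \<noteq> []" "last xs = CNF es"
  hence "size (CNF es) < size (CNF xs)" using size_last_less[of xs] by simp
  thus "((CNF es, x), CNF xs, x) \<in> measure (\<lambda>(a, _). size a)" by simp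
qed

definition large :: "cnf \<Rightarrow> nat set \<Rightarrow> bool" where
  "large \<alpha> X \<longleftrightarrow> finite X \<and> foldl fs \<alpha> (sorted_list_of_set X) = cnf_zero"

end

theory Submission
  imports Defs
begin

text \<open>Suppose no colour class A contains an \<omega>-large subset; then every class is too small to be
  \<omega>-large itself, i.e. \<open>|A| \<le> min A\<close>. Hence, for every t, the number of elements of X up to t
  is at most the sum of those class minima that are at most t; there are at most c such minima.
  An \<open>(\<omega>\<cdot>c)\<close>-large set splits into c consecutive blocks, a block with least element x having
  exactly x + 1 elements. Peeling off the first block uses up the smallest class minimum,
  which is at most x, while removing x + 1 elements; so the bound persists for the remaining
  blocks with one minimum fewer, and after all c blocks the bound is violated.\<close>

definition omega_mul_plus :: "nat \<Rightarrow> nat \<Rightarrow> cnf" where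
  "omega_mul_plus a b = CNF (replicate a cnf_one @ replicate b cnf_zero)"

lemma cnf_zero_eq_omega_mul_plus: "cnf_zero = omega_mul_plus 0 0"
  by (simp add: omega_mul_plus_def cnf_zero_def)

lemma cnf_omega_eq_omega_mul_plus: "cnf_omega = omega_mul_plus 1 0"
  by (simp add: omega_mul_plus_def cnf_omega_def)

lemma cnf_omega_mul_eq_omega_mul_plus: "cnf_omega_mul c = omega_mul_plus c 0"
  by (simp add: omega_mul_plus_def cnf_omega_mul_def)

lemma omega_mul_plus_eq_zero_iff: "omega_mul_plus a b = cnf_zero \<longleftrightarrow> a = 0 \<and> b = 0"
  by (simp add: omega_mul_plus_def cnf_zero_def)

lemma fs_omega_mul_plus_Suc: "fs (omega_mul_plus a (Suc b)) x = omega_mul_plus a b"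
  by (simp add: omega_mul_plus_def cnf_zero_def butlast_append del: replicate_Suc)
     (simp add: replicate_append_same[symmetric])

lemma fs_omega_mul_plus_limit: "fs (omega_mul_plus (Suc a) 0) x = omega_mul_plus a x"
  by (simp add: omega_mul_plus_def cnf_zero_def cnf_one_def butlast_append del: replicate_Suc)
     (simp add: replicate_append_same[symmetric])

lemma foldl_fs_zero: "foldl fs cnf_zero xs = cnf_zero"
  by (induction xs) (simp_all add: cnf_zero_def)

lemma foldl_fs_omega_mul_plus:
  "foldl fs (omega_mul_plus a b) xs =
    (if b \<le> length xs then foldl fs (omega_mul_plus a 0) (drop b xs)
     else omega_mul_plus a (b - length xs))"
proof (induction xs arbitrary: b)
  case (Cons x xs)
  then show ?case by (cases b) (simp_all add: fs_omega_mul_plus_Suc)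
qed simp

lemma large_omega_if_Min_less_card:
  assumes "finite H" "H \<noteq> {}" "Min H < card H"
  shows "large cnf_omega H"
proof -
  define rest where "rest = sorted_list_of_set (H - {Min H})"
  have L: "sorted_list_of_set H = Min H # rest"
    using assms(1,2) sorted_list_of_set_nonempty unfolding rest_def by blast
  then have "Min H \<le> length rest"
    using assms(3) by (metis length_Cons length_sorted_list_of_set less_Suc_eq_le)
  then have "foldl fs cnf_omega (sorted_list_of_set H) = cnf_zero"
    by (simp add: L cnf_omega_eq_omega_mul_plus fs_omega_mul_plus_limit
        foldl_fs_omega_mul_plus[of 0 "Min H"] foldl_fs_zero flip: cnf_zero_eq_omega_mul_plus)
  then show ?thesis using assms(1) by (simp add: large_def)
qed

lemma foldl_fs_omega_mul_Suc_eq_zero: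
  assumes "foldl fs (omega_mul_plus (Suc a) 0) (x # xs) = cnf_zero"
  shows "x \<le> length xs" "foldl fs (omega_mul_plus a 0) (drop x xs) = cnf_zero"
proof -
  have rest: "foldl fs (omega_mul_plus a x) xs = cnf_zero"
    using assms by (simp add: fs_omega_mul_plus_limit)
  show "x \<le> length xs"
  proof (rule ccontr)
    assume "\<not> x \<le> length xs"
    then have "omega_mul_plus a (x - length xs) = cnf_zero"
      using rest by (simp add: foldl_fs_omega_mul_plus[of a x])
    then show False using \<open>\<not> x \<le> length xs\<close> by (simp add: omega_mul_plus_eq_zero_iff)
  qed
  with rest show "foldl fs (omega_mul_plus a 0) (drop x xs) = cnf_zero"
    by (simp add: foldl_fs_omega_mul_plus[of a x])
qed

definition prefix_sum_bound :: "nat set \<Rightarrow> nat set \<Rightarrow> bool" where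
  "prefix_sum_bound F X \<longleftrightarrow> (\<forall>t. card {x \<in> X. x \<le> t} \<le> \<Sum>{m \<in> F. m \<le> t})"

lemma prefix_sum_bound_drop_block:
  assumes sorted: "sorted_wrt (<) (x # xs)" and len: "x \<le> length xs"
    and bound: "prefix_sum_bound F (set (x # xs))" and "finite F"
  obtains "F \<noteq> {}" "Min F \<le> x"
    and "\<And>t. \<forall>y \<in> set (x # take x xs). y \<le> t \<Longrightarrow>
           card {y \<in> set (drop x xs). y \<le> t} < \<Sum>{m \<in> F - {Min F}. m \<le> t}"
proof
  have "1 \<le> card {y \<in> set (x # xs). y \<le> x}"
    using card_mono[of "{y \<in> set (x # xs). y \<le> x}" "{x}"] by simp
  also have "\<dots> \<le> \<Sum>{m \<in> F. m \<le> x}"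
    using bound by (simp add: prefix_sum_bound_def)
  finally obtain m where m: "m \<in> F" "m \<le> x"
    by (metis (no_types, lifting) empty_Collect_eq not_one_le_zero sum.empty)
  then show "F \<noteq> {}" by blast
  show "Min F \<le> x" using m \<open>finite F\<close> by (meson Min_le order_trans)
  fix t
  assume block_le: "\<forall>y \<in> set (x # take x xs). y \<le> t"
  let ?B = "set (x # take x xs)" and ?R = "set (drop x xs)"
  have "sorted_wrt (<) (x # take x xs)" and block_less: "\<forall>a \<in> ?B. \<forall>b \<in> ?R. a < b"
    using sorted sorted_wrt_append[of "(<)" "x # take x xs" "drop x xs"] by simp_all
  then have dist: "distinct (x # take x xs)" and sep: "?B \<inter> ?R = {}"
    by (auto simp only: strict_sorted_iff)
  have split: "{y \<in> set (x # xs). y \<le> t} = ?B \<union> {y \<in> ?R. y \<le> t}"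
    using block_le set_append[of "take x xs" "drop x xs"] by auto
  have "card ?B = Suc x" using dist len by (simp add: distinct_card)
  moreover have "card {y \<in> set (x # xs). y \<le> t} = card ?B + card {y \<in> ?R. y \<le> t}"
    unfolding split using sep by (intro card_Un_disjoint) auto
  ultimately have "Suc x + card {y \<in> ?R. y \<le> t} = card {y \<in> set (x # xs). y \<le> t}"
    by simp
  also have "\<dots> \<le> \<Sum>{m \<in> F. m \<le> t}"
    using bound by (simp add: prefix_sum_bound_def)
  also have "\<dots> = Min F + \<Sum>{m \<in> F - {Min F}. m \<le> t}"
  proof -
    have "{m \<in> F. m \<le> t} = insert (Min F) {m \<in> F - {Min F}. m \<le> t}"
      using \<open>Min F \<le> x\<close> block_le Min_in[OF \<open>finite F\<close> \<open>F \<noteq> {}\<close>] by auto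
    then show ?thesis using \<open>finite F\<close> by simp
  qed
  finally show "card {y \<in> ?R. y \<le> t} < \<Sum>{m \<in> F - {Min F}. m \<le> t}"
    using \<open>Min F \<le> x\<close> by linarith
qed

lemma omega_mul_large_Nil_if_prefix_sum_bound:
  assumes "sorted_wrt (<) L" "foldl fs (omega_mul_plus a 0) L = cnf_zero"
    and "finite F" "card F \<le> a" "prefix_sum_bound F (set L)"
  shows "L = []"
  using assms
proof (induction a arbitrary: L F)
  case 0
  show ?case
  proof (rule ccontr)
    assume "L \<noteq> []"
    then obtain y where "y \<in> set L" by fastforce
    then have "card {z \<in> set L. z \<le> y} \<noteq> 0" by auto
    moreover have "card {z \<in> set L. z \<le> y} \<le> \<Sum>{m \<in> F. m \<le> y}"
      using "0.prems"(5) unfolding prefix_sum_bound_def by blast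
    moreover have "F = {}" using "0.prems"(3,4) by simp
    ultimately show False by (simp, blast)
  qed
next
  case (Suc a)
  show ?case
  proof (rule ccontr)
    assume "L \<noteq> []"
    then obtain x xs where L: "L = x # xs" by (cases L) auto
    let ?B = "set (x # take x xs)" and ?R = "set (drop x xs)" and ?F' = "F - {Min F}"
    have len: "x \<le> length xs" and rest_zero: "foldl fs (omega_mul_plus a 0) (drop x xs) = cnf_zero"
      using foldl_fs_omega_mul_Suc_eq_zero Suc.prems(2) unfolding L by blast+
    obtain "F \<noteq> {}"
      and rest_bound: "\<And>t. \<forall>y \<in> ?B. y \<le> t \<Longrightarrow> card {y \<in> ?R. y \<le> t} < \<Sum>{m \<in> ?F'. m \<le> t}"
      using prefix_sum_bound_drop_block[of x xs F] Suc.prems(1,3,5) len unfolding L by blast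
    have block_less: "\<forall>b \<in> ?B. \<forall>y \<in> ?R. b < y"
      using Suc.prems(1) sorted_wrt_append[of "(<)" "x # take x xs" "drop x xs"] unfolding L by simp
    have "prefix_sum_bound ?F' ?R"
      unfolding prefix_sum_bound_def
    proof
      fix t
      show "card {y \<in> ?R. y \<le> t} \<le> \<Sum>{m \<in> ?F'. m \<le> t}"
      proof (cases "\<forall>y \<in> ?B. y \<le> t")
        case True
        then show ?thesis using rest_bound less_imp_le by blast
      next
        case False
        then have "{y \<in> ?R. y \<le> t} = {}" using block_less by force
        then show ?thesis by (metis card.empty le0)
      qed
    qed
    moreover have "card ?F' \<le> a"
      using Suc.prems(3,4) Min_in[OF Suc.prems(3) \<open>F \<noteq> {}\<close>] by (simp add: card_Diff_singleton)
    ultimately have "drop x xs = []"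
      using Suc.IH[of "drop x xs" ?F'] Suc.prems(1,3) rest_zero unfolding L by auto
    then have "?F' = {}"
      using rest_zero \<open>card ?F' \<le> a\<close> Suc.prems(3) by (simp add: omega_mul_plus_eq_zero_iff)
    moreover have "card {y \<in> ?R. y \<le> Max ?B} < \<Sum>{m \<in> ?F'. m \<le> Max ?B}"
      by (rule rest_bound) simp
    ultimately show False by (metis (no_types, lifting) empty_Collect_eq empty_iff not_less0 sum.empty)
  qed
qed

definition class_minima :: "('a \<Rightarrow> 'b) \<Rightarrow> 'a::linorder set \<Rightarrow> 'a set" where
  "class_minima C X = {x \<in> X. \<forall>y \<in> X. C y = C x \<longrightarrow> x \<le> y}"

lemma inj_on_class_minima: "inj_on C (class_minima C X)"
proof (rule inj_onI)
  fix x y assume "x \<in> class_minima C X" "y \<in> class_minima C X" "C x = C y"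
  then have "x \<le> y" "y \<le> x" unfolding class_minima_def by simp_all
  then show "x = y" by (rule order.antisym)
qed

lemma card_class_minima_le:
  assumes "\<forall>x \<in> X. C x < c"
  shows "card (class_minima C X) \<le> c"
proof -
  have "C ` class_minima C X \<subseteq> {..<c}"
    using assms unfolding class_minima_def by blast
  then show ?thesis
    by (metis card_inj_on_le[OF inj_on_class_minima] card_lessThan finite_lessThan)
qed

lemma class_minimum_exists:
  assumes "finite X" "x \<in> X"
  obtains m where "m \<in> class_minima C X" "C m = C x" "m \<le> x"
proof
  let ?A = "{y \<in> X. C y = C x}"
  have fin: "finite ?A" using assms(1) by simp
  have "Min ?A \<in> ?A" using fin assms(2) by (intro Min_in) blast+
  moreover have "\<forall>y \<in> X. C y = C x \<longrightarrow> Min ?A \<le> y" using fin by simp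
  ultimately show "Min ?A \<in> class_minima C X" "C (Min ?A) = C x"
    unfolding class_minima_def by simp_all
  show "Min ?A \<le> x" using fin assms(2) by simp
qed

lemma prefix_sum_bound_class_minima:
  assumes "finite X" and small: "\<forall>m \<in> class_minima C X. card {y \<in> X. C y = C m} \<le> m"
  shows "prefix_sum_bound (class_minima C X) X"
  unfolding prefix_sum_bound_def
proof
  fix t
  let ?M = "{m \<in> class_minima C X. m \<le> t}" and ?class = "\<lambda>m. {y \<in> X. C y = C m}"
  have "{x \<in> X. x \<le> t} \<subseteq> (\<Union>m \<in> ?M. ?class m)"
  proof
    fix x assume x: "x \<in> {x \<in> X. x \<le> t}"
    then obtain m where "m \<in> class_minima C X" "C m = C x" "m \<le> x"
      using class_minimum_exists[OF assms(1)] by blast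
    with x show "x \<in> (\<Union>m \<in> ?M. ?class m)" by auto
  qed
  then have "card {x \<in> X. x \<le> t} \<le> card (\<Union>m \<in> ?M. ?class m)"
    using assms(1) by (intro card_mono) simp_all
  also have "\<dots> \<le> (\<Sum>m \<in> ?M. card (?class m))"
    using assms(1) by (intro card_UN_le) (simp add: class_minima_def)
  also have "\<dots> \<le> \<Sum>?M"
    using small by (intro sum_mono) simp
  finally show "card {x \<in> X. x \<le> t} \<le> \<Sum>?M" .
qed

theorem lemma4p1:
  fixes c :: nat and X :: "nat set" and C :: "nat \<Rightarrow> nat"
  assumes "c \<ge> 1"
    and "finite X"
    and "\<forall>x\<in>X. x > 2"
    and "large (cnf_omega_mul c) X"
    and "\<forall>x\<in>X. C x < c"
  shows "\<exists>H. H \<subseteq> X \<and> large cnf_omega H \<and> (\<exists>i. \<forall>x\<in>H. C x = i)"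
proof (rule ccontr)
  assume no_homogeneous: "\<not> ?thesis"
  have small: "\<forall>m \<in> class_minima C X. card {y \<in> X. C y = C m} \<le> m"
  proof
    fix m assume m: "m \<in> class_minima C X"
    let ?A = "{y \<in> X. C y = C m}"
    have "m \<in> ?A" "Min ?A = m"
      using m assms(2) by (auto simp: class_minima_def intro!: Min_eqI)
    then show "card ?A \<le> m"
      using no_homogeneous large_omega_if_Min_less_card[of ?A] assms(2) by fastforce
  qed
  have "sorted_list_of_set X = []"
  proof (rule omega_mul_large_Nil_if_prefix_sum_bound)
    show "foldl fs (omega_mul_plus c 0) (sorted_list_of_set X) = cnf_zero"
      using assms(4) by (simp add: large_def cnf_omega_mul_eq_omega_mul_plus)
    show "card (class_minima C X) \<le> c" using assms(5) by (rule card_class_minima_le)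
    show "prefix_sum_bound (class_minima C X) (set (sorted_list_of_set X))"
      using prefix_sum_bound_class_minima[OF assms(2) small] assms(2) by simp
  qed (use assms(2) in \<open>auto simp: class_minima_def\<close>)
  then show False
    using assms(1,2,4) by (simp add: large_def cnf_omega_mul_eq_omega_mul_plus omega_mul_plus_eq_zero_iff)
qed

end
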